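(* Let $X$ be an infinite dimensional real Banach space. Then $dens(X)\leq 2^{biort(X)}$.
   Context: $dens(X)$ is the least cardinality of a norm-dense subset of $X$. A biorthogonal system in $X$ is a family $(x_i,x_i^* )_{i\in I}\subseteq X\times X^*$ with $x_i^*(x_i)=1$ for all $i$ and $x_i^*(x_j)=0$ for $i\neq j$. $biort(X)$ is the supremum of $|I|$ over all biorthogonal systems $(x_i,x_i^* )_{i\in I}$ in $X$. *)

theory Defs
  imports "HOL-Analysis.Analysis"
begin

definition biorthogonal_system :: "'i set \<Rightarrow> ('i \<Rightarrow> 'a::real_normed_vector) \<Rightarrow> ('i \<Rightarrow> 'a \<Rightarrow> real) \<Rightarrow> bool" where
  "biorthogonal_system I x f \<longleftrightarrow>
     (\<forall>i\<in>I. bounded_linear (f i)) \<and>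
     (\<forall>i\<in>I. f i (x i) = 1) \<and>
     (\<forall>i\<in>I. \<forall>j\<in>I. i \<noteq> j \<longrightarrow> f i (x j) = 0)"

text \<open>K bounds biort(X) from above: every biorthogonal system has index set of
cardinality at most |K|. (Index sets may be taken inside X, since the x i are distinct.)\<close>
definition biort_bounded_by :: "'a::real_normed_vector itself \<Rightarrow> 'k set \<Rightarrow> bool" where
  "biort_bounded_by TYPE('a) K \<longleftrightarrow>
     (\<forall>(I::'a set) (x::'a \<Rightarrow> 'a) f. biorthogonal_system I x f \<longrightarrow> (card_of I, card_of K) \<in> ordLeq)"

definition is_biort :: "'a::real_normed_vector itself \<Rightarrow> 'k set \<Rightarrow> bool" where
  "is_biort T K \<longleftrightarrow> biort_bounded_by T K \<and>
     (\<forall>L::'a set. biort_bounded_by T L \<longrightarrow> (card_of K, card_of L) \<in> ordLeq)"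

end

theory Submission
  imports Defs "HOL-Library.Countable"
begin

text \<open>
By Zorn's lemma there is a maximal biorthogonal system (a, f a) for a in A. By Hahn-Banach,
maximality means that every vector annihilated by all f a lies in the closed span of A.
So a vector x is determined by its coordinates f a x together with a sequence of finite
combinations of A converging to x - r x, where r x is a vector chosen to have the same
coordinates as x: countably many reals per element of A, whence |X| \<le> 2^|\<nat> \<times> A \<times> \<nat>|.
A finite maximal system would span X, so in infinite dimension A is infinite and
|X| \<le> 2^|A| \<le> 2^biort(X); in particular dens(X) \<le> |X| \<le> 2^biort(X).
\<close>

unbundle cardinal_syntax

section \<open>Hahn-Banach\<close>

definition sublinear :: "('a::real_vector \<Rightarrow> real) \<Rightarrow> bool" where
  "sublinear p \<longleftrightarrow> (\<forall>x y. p (x + y) \<le> p x + p y) \<and> (\<forall>c x. 0 \<le> c \<longrightarrow> p (c *\<^sub>R x) = c * p x)"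

text \<open>A partially defined linear functional dominated by p, given by its graph G:
  (x, s) \<in> G means that it takes the value s at x.\<close>
definition dominated_graph :: "('a::real_vector \<Rightarrow> real) \<Rightarrow> ('a \<times> real) set \<Rightarrow> bool" where
  "dominated_graph p G \<longleftrightarrow> subspace G \<and> (\<forall>(x, s)\<in>G. s \<le> p x)"

lemma sublinear_scaled_norm: "0 \<le> C \<Longrightarrow> sublinear (\<lambda>x::'a::real_normed_vector. C * norm x)"
  unfolding sublinear_def by (auto simp: norm_triangle_ineq distrib_left[symmetric] mult_left_mono)

lemma sublinear_zero: "sublinear p \<Longrightarrow> p 0 = 0"
  unfolding sublinear_def by (metis mult_zero_left order_refl scaleR_zero_left)

lemma sublinear_scale_inverse:
  assumes "sublinear p" "0 < u"
  shows "u * p (inverse u *\<^sub>R y + w) = p (y + u *\<^sub>R w)"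
proof -
  have "u * p (inverse u *\<^sub>R y + w) = p (u *\<^sub>R (inverse u *\<^sub>R y + w))"
    using assms unfolding sublinear_def by simp
  also have "u *\<^sub>R (inverse u *\<^sub>R y + w) = y + u *\<^sub>R w"
    using assms(2) by (simp add: scaleR_add_right)
  finally show ?thesis .
qed

lemma dominated_graphD:
  assumes "dominated_graph p G"
  shows "subspace G" and "(x, s) \<in> G \<Longrightarrow> s \<le> p x"
  using assms unfolding dominated_graph_def by auto

lemma dominated_graph_single_valued:
  assumes p: "sublinear p" and G: "dominated_graph p G" and "(x, s) \<in> G" "(x, t) \<in> G"
  shows "s = t"
proof -
  have "(x, s) - (x, t) \<in> G" "(x, t) - (x, s) \<in> G"
    using assms(3,4) subspace_diff[OF dominated_graphD(1)[OF G]] by blast+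
  then have "(0, s - t) \<in> G" "(0, t - s) \<in> G"
    by simp_all
  then have "s - t \<le> p 0" "t - s \<le> p 0"
    using dominated_graphD(2)[OF G] by blast+
  then show ?thesis
    using sublinear_zero[OF p] by simp
qed

lemma dominated_graph_extension_value:
  assumes p: "sublinear p" and sub: "subspace G" and dom: "\<And>x s. (x, s) \<in> G \<Longrightarrow> s \<le> p x"
    and below: "\<And>y s. (y, s) \<in> G \<Longrightarrow> s - p (y - x0) \<le> v"
    and above: "\<And>z t. (z, t) \<in> G \<Longrightarrow> v \<le> p (z + x0) - t"
    and ys: "(y, s) \<in> G"
  shows "s + r * v \<le> p (y + r *\<^sub>R x0)"
proof (cases r "0::real" rule: linorder_cases)
  case greater
  have "(inverse r *\<^sub>R y, inverse r * s) \<in> G"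
    using subspace_scale[OF sub ys, of "inverse r"] by simp
  then have "r * v \<le> r * (p (inverse r *\<^sub>R y + x0) - inverse r * s)"
    using above greater by (simp add: mult_left_mono)
  also have "\<dots> = p (y + r *\<^sub>R x0) - s"
    using sublinear_scale_inverse[OF p greater] greater by (simp add: right_diff_distrib)
  finally show ?thesis by simp
next
  case less
  then have u: "0 < - r" by simp
  have "(inverse (- r) *\<^sub>R y, inverse (- r) * s) \<in> G"
    using subspace_scale[OF sub ys, of "inverse (- r)"] by simp
  then have "- r * (inverse (- r) * s - p (inverse (- r) *\<^sub>R y + - x0)) \<le> - r * v"
    using below u by (simp add: mult_left_mono)
  also have "- r * (inverse (- r) * s - p (inverse (- r) *\<^sub>R y + - x0)) = s - p (y + r *\<^sub>R x0)"
    using sublinear_scale_inverse[OF p u, of y "- x0"] u by (simp add: right_diff_distrib)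
  finally show ?thesis by simp
qed (use dom ys in simp)

lemma dominated_graph_extend:
  assumes p: "sublinear p" and G: "dominated_graph p G" and x0: "x0 \<notin> fst ` G"
  shows "\<exists>G'. dominated_graph p G' \<and> G \<subset> G'"
proof -
  have sub: "subspace G" and dom: "\<And>x s. (x, s) \<in> G \<Longrightarrow> s \<le> p x"
    using dominated_graphD[OF G] by auto
  have zero: "(0, 0) \<in> G"
    using subspace_0[OF sub] by (simp add: zero_prod_def)
  have gap: "s - p (y - x0) \<le> p (z + x0) - t" if "(y, s) \<in> G" "(z, t) \<in> G" for y s z t
  proof -
    have "s + t \<le> p (y + z)"
      using dom subspace_add[OF sub that] by simp
    also have "\<dots> \<le> p (y - x0) + p (z + x0)"
      using p unfolding sublinear_def by (metis add.commute diff_add_cancel add.assoc)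
    finally show ?thesis by simp
  qed
  define V where "V = {s - p (y - x0) | y s. (y, s) \<in> G}"
  define v where "v = Sup V"
  have below: "s - p (y - x0) \<le> v" if "(y, s) \<in> G" for y s
  proof -
    have "bdd_above V"
      unfolding V_def bdd_above_def using gap[OF _ zero] by auto
    then show ?thesis
      unfolding v_def V_def by (rule cSup_upper[rotated]) (use that in blast)
  qed
  have above: "v \<le> p (z + x0) - t" if "(z, t) \<in> G" for z t
    unfolding v_def using zero by (intro cSup_least) (auto simp: V_def intro: gap[OF _ that])
  define G' where "G' = {g + h | g h. g \<in> G \<and> h \<in> span {(x0, v)}}"
  have "subspace G'"
    unfolding G'_def by (rule subspace_sums[OF sub subspace_span])
  moreover have "s \<le> p x" if "(x, s) \<in> G'" for x s
  proof -
    from that obtain y t r where "(y, t) \<in> G" "x = y + r *\<^sub>R x0" "s = t + r * v"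
      unfolding G'_def span_singleton by auto
    then show ?thesis
      using dominated_graph_extension_value[OF p sub dom below above] by simp
  qed
  ultimately have "dominated_graph p G'"
    unfolding dominated_graph_def by auto
  moreover have "G \<subseteq> G'"
  proof
    fix g assume "g \<in> G"
    then show "g \<in> G'"
      unfolding G'_def by (intro CollectI exI[of _ g] exI[of _ 0]) (simp add: span_zero)
  qed
  moreover have "(x0, v) \<in> G'"
    unfolding G'_def using zero
    by (intro CollectI exI[of _ 0] exI[of _ "(x0, v)"]) (simp add: span_base zero_prod_def)
  moreover have "(x0, v) \<notin> G"
    using x0 by force
  ultimately show ?thesis by blast
qed

lemma subspace_Union_chain:
  assumes "C \<noteq> {}" and "subset.chain {S. subspace S} C"
  shows "subspace (\<Union>C)"
proof -
  have sub: "\<And>S. S \<in> C \<Longrightarrow> subspace S"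
    and cmp: "\<And>S T. S \<in> C \<Longrightarrow> T \<in> C \<Longrightarrow> S \<subseteq> T \<or> T \<subseteq> S"
    using assms(2) unfolding subset.chain_def by blast+
  show ?thesis
    unfolding subspace_def
  proof (intro conjI ballI allI)
    show "0 \<in> \<Union>C"
      using assms(1) sub subspace_0 by blast
  next
    fix x y assume "x \<in> \<Union>C" "y \<in> \<Union>C"
    then obtain S T where "S \<in> C" "T \<in> C" "x \<in> S" "y \<in> T" by blast
    then show "x + y \<in> \<Union>C"
      using cmp[of S T] sub subspace_add by blast
  next
    fix c x assume "x \<in> \<Union>C"
    then show "c *\<^sub>R x \<in> \<Union>C"
      using sub subspace_scale by blast
  qed
qed

lemma dominated_graph_total_extension:
  assumes p: "sublinear p" and G0: "dominated_graph p G0"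
  obtains M where "dominated_graph p M" and "G0 \<subseteq> M" and "\<And>x. x \<in> fst ` M"
proof -
  let ?\<G> = "{G. dominated_graph p G \<and> G0 \<subseteq> G}"
  have "\<exists>M\<in>?\<G>. \<forall>G\<in>?\<G>. M \<subseteq> G \<longrightarrow> G = M"
  proof (rule subset_Zorn_nonempty)
    show "?\<G> \<noteq> {}"
      using G0 by blast
  next
    fix C assume C: "C \<noteq> {}" "subset.chain ?\<G> C"
    then have "subset.chain {S. subspace S} C"
      by (auto simp: subset.chain_def dominated_graph_def)
    then have "subspace (\<Union>C)"
      using subspace_Union_chain[OF C(1)] by blast
    with C show "\<Union>C \<in> ?\<G>"
      by (auto simp: subset.chain_def dominated_graph_def)
  qed
  then obtain M where M: "dominated_graph p M" "G0 \<subseteq> M"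
    and max: "\<And>G. dominated_graph p G \<Longrightarrow> G0 \<subseteq> G \<Longrightarrow> M \<subseteq> G \<Longrightarrow> G = M"
    by auto
  have "x \<in> fst ` M" for x
  proof (rule ccontr)
    assume "x \<notin> fst ` M"
    then obtain G where "dominated_graph p G" "M \<subset> G"
      using dominated_graph_extend[OF p M(1)] by blast
    then show False
      using max[of G] M(2) by blast
  qed
  with M that show thesis by blast
qed

theorem Hahn_Banach_sublinear:
  assumes p: "sublinear p" and G0: "dominated_graph p G0"
  shows "\<exists>f. linear f \<and> (\<forall>x. f x \<le> p x) \<and> (\<forall>x s. (x, s) \<in> G0 \<longrightarrow> f x = s)"
proof -
  obtain M where M: "dominated_graph p M" "G0 \<subseteq> M" and total: "\<And>x. x \<in> fst ` M"
    using dominated_graph_total_extension[OF p G0] by blast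
  have unique: "\<exists>!s. (x, s) \<in> M" for x
  proof -
    obtain t where "(x, t) \<in> M"
      using total[of x] by force
    then show ?thesis
      using dominated_graph_single_valued[OF p M(1)] by (intro ex1I[of _ t]) auto
  qed
  define f where "f x = (THE s. (x, s) \<in> M)" for x
  have graph: "(x, f x) \<in> M" for x
    unfolding f_def by (rule theI'[OF unique])
  have graph_eq: "(x, s) \<in> M \<Longrightarrow> f x = s" for x s
    unfolding f_def by (rule the1_equality[OF unique])
  have sub: "subspace M"
    using dominated_graphD(1)[OF M(1)] .
  have "linear f"
  proof (rule linearI)
    show "f (x + y) = f x + f y" for x y
      using subspace_add[OF sub graph graph] graph_eq by simp
    show "f (c *\<^sub>R x) = c *\<^sub>R f x" for c x
      using subspace_scale[OF sub graph, of c] graph_eq by simp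
  qed
  moreover have "f x \<le> p x" for x
    using dominated_graphD(2)[OF M(1) graph] .
  moreover have "\<forall>x s. (x, s) \<in> G0 \<longrightarrow> f x = s"
    using M(2) graph_eq by auto
  ultimately show ?thesis by blast
qed

lemma bounded_linear_if_le_scaled_norm:
  fixes f :: "'a::real_normed_vector \<Rightarrow> real"
  assumes "linear f" and "\<And>x. f x \<le> C * norm x"
  shows "bounded_linear f"
proof (rule bounded_linear_intro[where K = C])
  show "f (x + y) = f x + f y" "f (c *\<^sub>R x) = c *\<^sub>R f x" for x y c
    using assms(1) by (simp_all add: linear_add linear_scale)
  show "norm (f x) \<le> norm x * C" for x
    using assms(2)[of x] assms(2)[of "- x"] linear_neg[OF assms(1), of x]
    by (simp add: abs_le_iff mult.commute)
qed

lemma infdist_subspace_le: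
  fixes Z :: "'a::real_normed_vector set"
  assumes Z: "subspace Z" and "z \<in> Z" and s: "0 < s"
  shows "s * infdist w Z \<le> norm (z + s *\<^sub>R w)"
proof -
  have "- (inverse s *\<^sub>R z) \<in> Z"
    using Z \<open>z \<in> Z\<close> by (simp add: subspace_neg subspace_scale)
  then have "infdist w Z \<le> dist w (- (inverse s *\<^sub>R z))"
    by (rule infdist_le)
  also have "\<dots> = norm (inverse s *\<^sub>R (z + s *\<^sub>R w))"
    using s by (simp add: dist_norm scaleR_add_right add.commute)
  also have "\<dots> = inverse s * norm (z + s *\<^sub>R w)"
    using s by simp
  finally show ?thesis
    using s by (simp add: field_simps)
qed

lemma separating_functional:
  fixes Z :: "'a::real_normed_vector set"
  assumes Z: "subspace Z" and w: "w \<notin> closure Z"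
  shows "\<exists>f::'a \<Rightarrow> real. bounded_linear f \<and> f w = 1 \<and> (\<forall>z\<in>Z. f z = 0)"
proof -
  define d where "d = infdist w Z"
  have "Z \<noteq> {}"
    using subspace_0[OF Z] by blast
  then have d: "0 < d"
    unfolding d_def using w in_closure_iff_infdist_zero infdist_nonneg by (metis order_less_le)
  define G0 where "G0 = {g + h | g h. g \<in> Z \<times> {0} \<and> h \<in> span {(w, 1::real)}}"
  have "subspace G0"
    unfolding G0_def by (intro subspace_sums subspace_Times Z subspace_single_0 subspace_span)
  moreover have "s \<le> inverse d * norm x" if "(x, s) \<in> G0" for x s
  proof -
    from that obtain z where z: "z \<in> Z" "x = z + s *\<^sub>R w"
      unfolding G0_def span_singleton by auto
    show ?thesis
    proof (cases "0 < s")
      case True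
      then show ?thesis
        using infdist_subspace_le[OF Z z(1) True, of w] d z(2) unfolding d_def by (simp add: field_simps)
    qed (use d in \<open>simp add: order_trans[of s 0]\<close>)
  qed
  ultimately have "dominated_graph (\<lambda>x. inverse d * norm x) G0"
    unfolding dominated_graph_def by auto
  moreover have "sublinear (\<lambda>x. inverse d * norm x)"
    using d by (intro sublinear_scaled_norm) simp
  ultimately obtain f where f: "linear f" "\<And>x. f x \<le> inverse d * norm x" "\<forall>x s. (x, s) \<in> G0 \<longrightarrow> f x = s"
    using Hahn_Banach_sublinear by blast
  have "(w, 1) \<in> G0"
    unfolding G0_def using subspace_0[OF Z]
    by (intro CollectI exI[of _ 0] exI[of _ "(w, 1)"]) (simp add: span_base zero_prod_def)
  moreover have "(z, 0) \<in> G0" if "z \<in> Z" for z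
    unfolding G0_def using that
    by (intro CollectI exI[of _ "(z, 0)"] exI[of _ 0]) (simp add: span_zero)
  ultimately have "f w = 1" "\<forall>z\<in>Z. f z = 0"
    using f(3) by blast+
  with bounded_linear_if_le_scaled_norm[OF f(1,2)] show ?thesis by blast
qed

section \<open>Maximal biorthogonal systems\<close>

lemma biorthogonal_systemD:
  assumes "biorthogonal_system I x f" and "i \<in> I"
  shows "bounded_linear (f i)" and "f i (x i) = 1" and "j \<in> I \<Longrightarrow> i \<noteq> j \<Longrightarrow> f i (x j) = 0"
  using assms unfolding biorthogonal_system_def by auto

lemma biorthogonal_system_inj_on:
  assumes "biorthogonal_system I x f"
  shows "inj_on x I"
proof (rule inj_onI)
  fix i j assume "i \<in> I" "j \<in> I" "x i = x j"
  then show "i = j"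
    using assms unfolding biorthogonal_system_def by force
qed

lemma biorthogonal_system_reindex:
  assumes bs: "biorthogonal_system I x f"
  shows "biorthogonal_system (x ` I) (\<lambda>a. a) (\<lambda>a. f (inv_into I x a))"
proof -
  have "inv_into I x (x i) = i" if "i \<in> I" for i
    using inv_into_f_f[OF biorthogonal_system_inj_on[OF bs] that] .
  then show ?thesis
    using bs unfolding biorthogonal_system_def by auto
qed

lemma biorthogonal_system_Union_chain:
  assumes "subset.chain {I. biorthogonal_system I x f} C"
  shows "biorthogonal_system (\<Union>C) x f"
proof -
  have bs: "\<And>I. I \<in> C \<Longrightarrow> biorthogonal_system I x f"
    and cmp: "\<And>I J. I \<in> C \<Longrightarrow> J \<in> C \<Longrightarrow> I \<subseteq> J \<or> J \<subseteq> I"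
    using assms unfolding subset.chain_def by blast+
  have "f i (x j) = 0" if ij: "i \<in> \<Union>C" "j \<in> \<Union>C" "i \<noteq> j" for i j
  proof -
    obtain I J where "I \<in> C" "J \<in> C" "i \<in> I" "j \<in> J"
      using ij by blast
    then obtain K where "K \<in> C" "i \<in> K" "j \<in> K"
      using cmp[of I J] by blast
    then show ?thesis
      using biorthogonal_systemD(3)[OF bs] ij(3) by simp
  qed
  moreover have "bounded_linear (f i) \<and> f i (x i) = 1" if "i \<in> \<Union>C" for i
  proof -
    from that obtain I where "I \<in> C" "i \<in> I" by blast
    then show ?thesis
      using biorthogonal_systemD(1,2)[OF bs] by simp
  qed
  ultimately show ?thesis
    unfolding biorthogonal_system_def by blast
qed

lemma maximal_biorthogonal_system_annihilator:
  fixes P :: "('a::real_normed_vector \<times> ('a \<Rightarrow> real)) set"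
  assumes bs: "biorthogonal_system P fst snd"
    and max: "\<And>Q. biorthogonal_system Q fst snd \<Longrightarrow> P \<subseteq> Q \<Longrightarrow> Q = P"
    and w: "\<forall>i\<in>P. snd i w = 0"
  shows "w \<in> closure (span (fst ` P))"
proof (rule ccontr)
  assume w_notin: "w \<notin> closure (span (fst ` P))"
  then obtain g :: "'a \<Rightarrow> real" where g: "bounded_linear g" "g w = 1" "\<forall>z\<in>span (fst ` P). g z = 0"
    using separating_functional[OF subspace_span w_notin] by blast
  have new: "(w, g) \<notin> P"
  proof
    assume "(w, g) \<in> P"
    then have "w \<in> span (fst ` P)"
      by (intro span_base) force
    then show False
      using w_notin closure_subset by blast
  qed
  have "g (fst j) = 0" if "j \<in> P" for j
    using g(3) span_base[of "fst j" "fst ` P"] that by simp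
  then have "biorthogonal_system (insert (w, g) P) fst snd"
    using bs g(1,2) w unfolding biorthogonal_system_def by auto
  then have "insert (w, g) P = P"
    using max subset_insertI by blast
  with new show False by blast
qed

lemma biorthogonal_system_with_annihilator_in_closed_span:
  obtains A :: "'a::real_normed_vector set" and F
  where "biorthogonal_system A (\<lambda>a. a) F" and "\<And>w. \<forall>a\<in>A. F a w = 0 \<Longrightarrow> w \<in> closure (span A)"
proof -
  \<comment> \<open>Zorn's lemma on sets of pairs (x, f), indexed by themselves; f x = 1 forbids two functionals on one vector\<close>
  obtain P :: "('a \<times> ('a \<Rightarrow> real)) set" where bs: "biorthogonal_system P fst snd"
    and max: "\<And>Q. biorthogonal_system Q fst snd \<Longrightarrow> P \<subseteq> Q \<Longrightarrow> Q = P"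
  proof -
    have "\<exists>P\<in>{P. biorthogonal_system P fst snd}. \<forall>Q\<in>{P. biorthogonal_system P fst snd}. P \<subseteq> Q \<longrightarrow> Q = P"
      by (rule subset_Zorn') (simp add: biorthogonal_system_Union_chain)
    with that show thesis by auto
  qed
  define F where "F a = snd (inv_into P fst a)" for a
  have "biorthogonal_system (fst ` P) (\<lambda>a. a) F"
    unfolding F_def by (rule biorthogonal_system_reindex[OF bs])
  moreover have "w \<in> closure (span (fst ` P))" if "\<forall>a\<in>fst ` P. F a w = 0" for w
  proof (rule maximal_biorthogonal_system_annihilator[OF bs max])
    show "\<forall>i\<in>P. snd i w = 0"
      using that inv_into_f_f[OF biorthogonal_system_inj_on[OF bs]] unfolding F_def by force
  qed
  ultimately show thesis
    using that by blast
qed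

lemma biorthogonal_expansion_of_basis_vector:
  assumes "finite A" and bs: "biorthogonal_system A (\<lambda>a. a) F" and "b \<in> A"
  shows "(\<Sum>a\<in>A. F a b *\<^sub>R a) = b"
proof -
  have "(\<Sum>a\<in>A. F a b *\<^sub>R a) = F b b *\<^sub>R b + (\<Sum>a\<in>A - {b}. F a b *\<^sub>R a)"
    using assms(1,3) by (rule sum.remove)
  also have "(\<Sum>a\<in>A - {b}. F a b *\<^sub>R a) = 0"
    using biorthogonal_systemD(3)[OF bs] \<open>b \<in> A\<close> by (intro sum.neutral) auto
  finally show ?thesis
    using biorthogonal_systemD(2)[OF bs \<open>b \<in> A\<close>] by simp
qed

lemma biorthogonal_coordinate_of_expansion:
  assumes "finite A" and bs: "biorthogonal_system A (\<lambda>a. a) F" and "b \<in> A"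
  shows "F b (\<Sum>a\<in>A. c a *\<^sub>R a) = c b"
proof -
  interpret bounded_linear "F b"
    using biorthogonal_systemD(1)[OF bs \<open>b \<in> A\<close>] .
  have "F b (\<Sum>a\<in>A. c a *\<^sub>R a) = (\<Sum>a\<in>A. c a * F b a)"
    by (simp add: sum scale)
  also have "\<dots> = c b * F b b + (\<Sum>a\<in>A - {b}. c a * F b a)"
    using assms(1,3) by (rule sum.remove)
  also have "(\<Sum>a\<in>A - {b}. c a * F b a) = 0"
    using biorthogonal_systemD(3)[OF bs \<open>b \<in> A\<close>] by (intro sum.neutral) auto
  finally show ?thesis
    using biorthogonal_systemD(2)[OF bs \<open>b \<in> A\<close>] by simp
qed

lemma span_eq_UNIV_if_finite_biorthogonal:
  fixes A :: "'a::real_normed_vector set"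
  assumes fin: "finite A" and bs: "biorthogonal_system A (\<lambda>a. a) F"
    and ann: "\<And>w. \<forall>a\<in>A. F a w = 0 \<Longrightarrow> w \<in> closure (span A)"
  shows "span A = UNIV"
proof -
  \<comment> \<open>Q is the continuous projection onto the joint kernel of the F a along span A\<close>
  define Q where "Q z = z - (\<Sum>a\<in>A. F a z *\<^sub>R a)" for z
  have "bounded_linear Q"
    unfolding Q_def using biorthogonal_systemD(1)[OF bs]
    by (intro bounded_linear_sub bounded_linear_ident bounded_linear_sum bounded_linear_scaleR_const)
  then have Q0: "Q z = 0" if "z \<in> closure (span A)" for z
  proof (rule continuous_constant_on_closure[OF linear_continuous_on _ that])
    show "Q y = 0" if "y \<in> span A" for y
      using linear_eq_0_on_span[OF bounded_linear.linear[OF \<open>bounded_linear Q\<close>] _ that]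
        biorthogonal_expansion_of_basis_vector[OF fin bs] unfolding Q_def by simp
  qed
  have coord: "F b (Q z) = 0" if "b \<in> A" for b z
    using biorthogonal_coordinate_of_expansion[OF fin bs that] that
      linear_diff[OF bounded_linear.linear[OF biorthogonal_systemD(1)[OF bs that]]] unfolding Q_def by simp
  have "x \<in> span A" for x
  proof -
    have "Q (Q x) = 0"
      using Q0 ann coord by simp
    moreover have "Q (Q x) = Q x"
      using coord unfolding Q_def[of "Q x"] by simp
    ultimately have "x = (\<Sum>a\<in>A. F a x *\<^sub>R a)"
      unfolding Q_def by simp
    also have "\<dots> \<in> span A"
      by (intro span_sum span_scale span_base)
    finally show ?thesis .
  qed
  then show ?thesis by auto
qed

section \<open>Coding vectors by real coordinates\<close>

text \<open>Only finitely supported coefficients are meant; otherwise the sum is junk (0).\<close>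
definition lincomb :: "'a set \<Rightarrow> ('a \<Rightarrow> real) \<Rightarrow> 'a::real_vector" where
  "lincomb A c = (\<Sum>a\<in>{a\<in>A. c a \<noteq> 0}. c a *\<^sub>R a)"

lemma lincomb_cong: "(\<And>a. a \<in> A \<Longrightarrow> c a = c' a) \<Longrightarrow> lincomb A c = lincomb A c'"
  unfolding lincomb_def by (rule sum.cong) auto

lemma span_imp_lincomb:
  assumes "y \<in> span A"
  shows "\<exists>c. lincomb A c = y"
proof -
  from assms obtain S u where S: "finite S" "S \<subseteq> A" "y = (\<Sum>v\<in>S. u v *\<^sub>R v)"
    unfolding span_explicit by blast
  define c where "c v = (if v \<in> S then u v else 0)" for v
  have "lincomb A c = (\<Sum>v\<in>S. c v *\<^sub>R v)"
    unfolding lincomb_def using S(1,2) by (intro sum.mono_neutral_left) (auto simp: c_def)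
  also have "\<dots> = y"
    unfolding S(3) c_def by simp
  finally show ?thesis by blast
qed

lemma closure_span_imp_lincomb_limit:
  fixes A :: "'a::real_normed_vector set"
  assumes "z \<in> closure (span A)"
  shows "\<exists>c. (\<lambda>n. lincomb A (c n)) \<longlonglongrightarrow> z"
proof -
  obtain s where s: "\<forall>n. s n \<in> span A" "s \<longlonglongrightarrow> z"
    using assms unfolding closure_sequential by blast
  have "\<forall>n. \<exists>c. lincomb A c = s n"
    using s(1) span_imp_lincomb by blast
  then obtain c where "\<And>n. lincomb A (c n) = s n"
    by metis
  with s(2) show ?thesis
    by (intro exI[of _ c]) simp
qed

lemma real_code_if_annihilator_in_closed_span:
  fixes A :: "'a::real_normed_vector set" and F :: "'a \<Rightarrow> 'a \<Rightarrow> real"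
  assumes lin: "\<And>a. a \<in> A \<Longrightarrow> linear (F a)"
    and ann: "\<And>w. \<forall>a\<in>A. F a w = 0 \<Longrightarrow> w \<in> closure (span A)"
  shows "\<exists>code :: 'a \<Rightarrow> nat \<Rightarrow> 'a \<Rightarrow> real. \<forall>x y. (\<forall>n. \<forall>a\<in>A. code x n a = code y n a) \<longrightarrow> x = y"
proof -
  \<comment> \<open>r x depends only on the coordinates F a x, and x - r x is a limit of finite combinations\<close>
  define r where "r x = (SOME y. \<forall>a\<in>A. F a y = F a x)" for x
  define approx where "approx z = (SOME c. (\<lambda>n. lincomb A (c n)) \<longlonglongrightarrow> z)" for z
  define code where "code x n = (case n of 0 \<Rightarrow> (\<lambda>a. F a x) | Suc m \<Rightarrow> approx (x - r x) m)" for x n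
  have r: "\<forall>a\<in>A. F a (r x) = F a x" for x
    unfolding r_def by (rule someI[of _ x]) simp
  have "x - r x \<in> closure (span A)" for x
    using r lin ann by (simp add: linear_diff)
  then have approx: "(\<lambda>n. lincomb A (approx (x - r x) n)) \<longlonglongrightarrow> x - r x" for x
    unfolding approx_def by (rule someI_ex[OF closure_span_imp_lincomb_limit])
  have "x = y" if same: "\<forall>n. \<forall>a\<in>A. code x n a = code y n a" for x y
  proof -
    have "\<forall>a\<in>A. F a x = F a y"
      using spec[OF same, of 0] by (simp add: code_def)
    then have r_eq: "r x = r y"
      unfolding r_def by metis
    have "lincomb A (approx (x - r x) n) = lincomb A (approx (y - r y) n)" for n
      using spec[OF same, of "Suc n"] by (intro lincomb_cong) (simp add: code_def)
    then have "x - r x = y - r y"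
      using approx[of x] approx[of y] LIMSEQ_unique by auto
    with r_eq show ?thesis by simp
  qed
  then show ?thesis by blast
qed

section \<open>Cardinality bounds\<close>

lemma inj_rational_cut: "inj (\<lambda>t::real. {m::nat. of_rat (from_nat m) < t})"
proof (rule injI)
  have separate: "{m::nat. of_rat (from_nat m) < t} \<noteq> {m. of_rat (from_nat m) < t'}" if lt: "t < t'" for t t' :: real
  proof -
    obtain q :: rat where "t < of_rat q" "of_rat q < t'"
      using of_rat_dense[OF lt] by blast
    then have "to_nat q \<in> {m. of_rat (from_nat m) < t'} - {m. of_rat (from_nat m) < t}"
      by simp
    then show ?thesis by blast
  qed
  fix t t' :: real
  assume "{m::nat. of_rat (from_nat m) < t} = {m. of_rat (from_nat m) < t'}"
  then show "t = t'"
    using separate[of t t'] separate[of t' t] by (metis linorder_neqE_linordered_idom)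
qed

lemma card_of_le_Pow_if_real_code:
  fixes code :: "'b \<Rightarrow> nat \<Rightarrow> 'a \<Rightarrow> real"
  assumes code: "\<forall>x y. (\<forall>n. \<forall>a\<in>A. code x n a = code y n a) \<longrightarrow> x = y"
  shows "|UNIV :: 'b set| \<le>o |Pow (UNIV \<times> A \<times> UNIV :: (nat \<times> 'a \<times> nat) set)|"
proof -
  define cut where "cut t = {m::nat. of_rat (from_nat m) < t}" for t :: real
  define \<Phi> where "\<Phi> x = {(n, a, m). a \<in> A \<and> m \<in> cut (code x n a)}" for x
  have "inj \<Phi>"
  proof (rule injI)
    fix x y assume "\<Phi> x = \<Phi> y"
    then have "cut (code x n a) = cut (code y n a)" if "a \<in> A" for n a
      using that unfolding \<Phi>_def by (auto simp: set_eq_iff)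
    then have "code x n a = code y n a" if "a \<in> A" for n a
      using injD[OF inj_rational_cut] that unfolding cut_def by blast
    then show "x = y"
      using code by blast
  qed
  moreover have "range \<Phi> \<subseteq> Pow (UNIV \<times> A \<times> UNIV)"
    unfolding \<Phi>_def by auto
  ultimately show ?thesis
    unfolding card_of_ordLeq[symmetric] by blast
qed

lemma card_of_Pow_mono:
  assumes "|A| \<le>o |B|"
  shows "|Pow A| \<le>o |Pow B|"
proof -
  obtain f where "inj_on f A" "f ` A \<subseteq> B"
    using assms unfolding card_of_ordLeq[symmetric] by blast
  then have "inj_on (image f) (Pow A)" "image f ` Pow A \<subseteq> Pow B"
    using inj_on_image_Pow by blast+
  then show ?thesis
    unfolding card_of_ordLeq[symmetric] by blast
qed

lemma card_of_nat_Times_Times_nat: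
  assumes "infinite A"
  shows "|UNIV \<times> A \<times> UNIV :: (nat \<times> 'a \<times> nat) set| \<le>o |A|"
proof -
  have inf: "infinite (A \<times> (UNIV :: nat set))"
    using assms finite_cartesian_productD1[of A "UNIV :: nat set"] by blast
  have "|UNIV \<times> A \<times> UNIV :: (nat \<times> 'a \<times> nat) set| =o |A \<times> (UNIV :: nat set)|"
    using card_of_Times_infinite[OF inf, of "UNIV :: nat set"] inf by (simp add: infinite_iff_card_of_nat)
  also have "|A \<times> (UNIV :: nat set)| =o |A|"
    using card_of_Times_infinite[OF assms, of "UNIV :: nat set"] assms by (simp add: infinite_iff_card_of_nat)
  finally show ?thesis
    by (rule ordIso_imp_ordLeq)
qed

theorem mainTheorem2:
  fixes K :: "'a::banach set"
  assumes inf_dim: "\<not> (\<exists>B::'a set. finite B \<and> span B = UNIV)"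
    and biort: "is_biort TYPE('a) K"
  shows "\<exists>D::'a set. closure D = UNIV \<and> (card_of D, card_of (Pow K)) \<in> ordLeq"
proof -
  obtain A :: "'a set" and F where bs: "biorthogonal_system A (\<lambda>a. a) F"
    and ann: "\<And>w. \<forall>a\<in>A. F a w = 0 \<Longrightarrow> w \<in> closure (span A)"
    using biorthogonal_system_with_annihilator_in_closed_span by blast
  have "linear (F a)" if "a \<in> A" for a
    using biorthogonal_systemD(1)[OF bs that] by (rule bounded_linear.linear)
  then obtain code :: "'a \<Rightarrow> nat \<Rightarrow> 'a \<Rightarrow> real"
    where code: "\<forall>x y. (\<forall>n. \<forall>a\<in>A. code x n a = code y n a) \<longrightarrow> x = y"
    using real_code_if_annihilator_in_closed_span ann by blast
  have "|A| \<le>o |K|"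
    using biort bs unfolding is_biort_def biort_bounded_by_def by blast
  moreover have "infinite A"
    using span_eq_UNIV_if_finite_biorthogonal[OF _ bs ann] inf_dim by blast
  ultimately have "|Pow (UNIV \<times> A \<times> UNIV :: (nat \<times> 'a \<times> nat) set)| \<le>o |Pow K|"
    by (intro card_of_Pow_mono ordLeq_transitive[OF card_of_nat_Times_Times_nat])
  with card_of_le_Pow_if_real_code[OF code] have "|UNIV :: 'a set| \<le>o |Pow K|"
    by (rule ordLeq_transitive)
  then show ?thesis
    by (intro exI[of _ UNIV]) simp
qed

end
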